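(* Let $k$ be a difference field of characteristic $0$, $R=k\{y_1,\ldots,y_n\}$, and let $I$ be a monomial $\sigma$-ideal of $R$ with support set $S=\{\mathbf{u}\in\mathbb{N}[x]^n:\mathbf{y}^{\mathbf{u}}\in I\}$ (so $I=\bigoplus_{\mathbf{u}\in S}k\mathbf{y}^{\mathbf{u}}$). Then: (1) $I$ is radical iff for all $m\in\mathbb{N}\setminus\{0\}$ and $\mathbf{u}\in\mathbb{N}[x]^n$, $m\mathbf{u}\in S$ implies $\mathbf{u}\in S$; (2) $I$ is reflexive iff for all $\mathbf{u}\in\mathbb{N}[x]^n$, $x\mathbf{u}\in S$ implies $\mathbf{u}\in S$; (3) $I$ is perfect iff for all nonzero $g\in\mathbb{N}[x]$ and $\mathbf{u}\in\mathbb{N}[x]^n$, $g\mathbf{u}\in S$ implies $\mathbf{u}\in S$; (4) $I$ is prime iff for all $\mathbf{u},\mathbf{v}\in\mathbb{N}[x]^n$, $\mathbf{u}+\mathbf{v}\in S$ implies $\mathbf{u}\in S$ or $\mathbf{v}\in S$.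
   Context: A difference field is a field $k$ with a ring endomorphism $\sigma$; $R=k\{y_1,\ldots,y_n\}$ is the polynomial ring over $k$ in the variables $\sigma^j(y_i)$, with $\sigma$ extended naturally. For $p=\sum_i c_ix^i\in\mathbb{N}[x]$ and $a\in R$, $a^p=\prod_i(\sigma^i(a))^{c_i}$; for $\mathbf{u}\in\mathbb{N}[x]^n$, $\mathbf{y}^{\mathbf{u}}=y_1^{u_1}\cdots y_n^{u_n}$; $\mathbb{N}[x]^n$ is a module over the semiring $\mathbb{N}[x]$ coordinatewise. A $\sigma$-ideal is an ideal $I$ with $\sigma(I)\subseteq I$; monomial if generated by monomials. $I$ is reflexive if $\sigma(a)\in I$ implies $a\in I$; perfect if $a^g\in I$ implies $a\in I$ for every nonzero $g\in\mathbb{N}[x]$; prime means prime as an ideal. *)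

theory Defs
  imports Main "HOL-Library.Poly_Mapping" "HOL-Computational_Algebra.Polynomial"
begin

text \<open>Variables of the difference polynomial ring k{y_1..y_n}: the pair (i,j) stands for
  sigma^j(y_i); the index type 'n (finite) enumerates y_1..y_n.\<close>

type_synonym ('n, 'k) dpoly = "(('n \<times> nat) \<Rightarrow>\<^sub>0 nat) \<Rightarrow>\<^sub>0 'k"

type_synonym 'n exps = "'n \<Rightarrow> nat poly"

definition exp_monomial :: "('n::finite) exps \<Rightarrow> ('n \<times> nat) \<Rightarrow>\<^sub>0 nat" where
  "exp_monomial u = Abs_poly_mapping (\<lambda>(i, j). coeff (u i) j)"

definition ymon :: "('n::finite) exps \<Rightarrow> ('n, 'k::comm_ring_1) dpoly" where
  "ymon u = Poly_Mapping.single (exp_monomial u) 1"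

definition exps_smult :: "nat poly \<Rightarrow> 'n exps \<Rightarrow> 'n exps" where
  "exps_smult g u = (\<lambda>i. g * u i)"

definition exps_add :: "'n exps \<Rightarrow> 'n exps \<Rightarrow> 'n exps" where
  "exps_add u v = (\<lambda>i. u i + v i)"

definition shift_mon :: "(('n \<times> nat) \<Rightarrow>\<^sub>0 nat) \<Rightarrow> (('n \<times> nat) \<Rightarrow>\<^sub>0 nat)" where
  "shift_mon m = Abs_poly_mapping (\<lambda>(i, j). if j = 0 then 0 else Poly_Mapping.lookup m (i, j - 1))"

definition sigmaR :: "('k \<Rightarrow> 'k) \<Rightarrow> ('n, 'k::comm_ring_1) dpoly \<Rightarrow> ('n, 'k) dpoly" where
  "sigmaR \<sigma> p = (\<Sum>m\<in>Poly_Mapping.keys p. Poly_Mapping.single (shift_mon m) (\<sigma> (Poly_Mapping.lookup p m)))"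

definition dpower :: "('k \<Rightarrow> 'k) \<Rightarrow> ('n, 'k::comm_ring_1) dpoly \<Rightarrow> nat poly \<Rightarrow> ('n, 'k) dpoly" where
  "dpower \<sigma> a g = (\<Prod>i\<le>degree g. ((sigmaR \<sigma> ^^ i) a) ^ coeff g i)"

definition is_ideal :: "'a::comm_ring_1 set \<Rightarrow> bool" where
  "is_ideal I \<longleftrightarrow> 0 \<in> I \<and> (\<forall>a\<in>I. \<forall>b\<in>I. a + b \<in> I) \<and> (\<forall>r a. a \<in> I \<longrightarrow> r * a \<in> I)"

definition ideal_gen :: "'a::comm_ring_1 set \<Rightarrow> 'a set" where
  "ideal_gen G = \<Inter>{I. is_ideal I \<and> G \<subseteq> I}"

definition sigma_ideal :: "('k \<Rightarrow> 'k) \<Rightarrow> ('n, 'k::comm_ring_1) dpoly set \<Rightarrow> bool" where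
  "sigma_ideal \<sigma> I \<longleftrightarrow> is_ideal I \<and> sigmaR \<sigma> ` I \<subseteq> I"

definition monomial_ideal :: "('n::finite, 'k::comm_ring_1) dpoly set \<Rightarrow> bool" where
  "monomial_ideal I \<longleftrightarrow> is_ideal I \<and> (\<exists>G. G \<subseteq> range ymon \<and> I = ideal_gen G)"

definition support_set :: "('n::finite, 'k::comm_ring_1) dpoly set \<Rightarrow> 'n exps set" where
  "support_set I = {u. ymon u \<in> I}"

definition radical_ideal :: "'a::comm_ring_1 set \<Rightarrow> bool" where
  "radical_ideal I \<longleftrightarrow> (\<forall>a (m::nat). m > 0 \<longrightarrow> a ^ m \<in> I \<longrightarrow> a \<in> I)"

definition reflexive_ideal :: "('k \<Rightarrow> 'k) \<Rightarrow> ('n, 'k::comm_ring_1) dpoly set \<Rightarrow> bool" where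
  "reflexive_ideal \<sigma> I \<longleftrightarrow> (\<forall>a. sigmaR \<sigma> a \<in> I \<longrightarrow> a \<in> I)"

definition perfect_ideal :: "('k \<Rightarrow> 'k) \<Rightarrow> ('n, 'k::comm_ring_1) dpoly set \<Rightarrow> bool" where
  "perfect_ideal \<sigma> I \<longleftrightarrow> (\<forall>a g. g \<noteq> 0 \<longrightarrow> dpower \<sigma> a g \<in> I \<longrightarrow> a \<in> I)"

definition prime_ideal :: "'a::comm_ring_1 set \<Rightarrow> bool" where
  "prime_ideal I \<longleftrightarrow> is_ideal I \<and> I \<noteq> UNIV \<and> (\<forall>a b. a * b \<in> I \<longrightarrow> a \<in> I \<or> b \<in> I)"

end

theory Submission
  imports Defs "HOL-Library.Countable_Set"
begin

text \<open>Fix a term order on difference monomials that is compatible with multiplication and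
  with \<open>\<sigma>\<close>. Modulo the monomial ideal \<open>I\<close>, every \<open>a \<notin> I\<close> is congruent to a nonzero
  \<open>a'\<close> none of whose monomials lies in \<open>I\<close>, so its leading monomial is \<open>y^u\<close> with
  \<open>u \<notin> S\<close>. The operations \<open>a^m\<close>, \<open>a^g\<close> and \<open>a b\<close> respect congruence modulo \<open>I\<close> and
  multiply leading monomials, so the image of \<open>a'\<close> has leading monomial \<open>y^(m u)\<close>,
  \<open>y^(g u)\<close> or \<open>y^(u + v)\<close>; if \<open>S\<close> has the corresponding closure property this monomial,
  hence the image, is not in \<open>I\<close>. Reflexivity needs no order: \<open>\<sigma>\<close> maps the monomials of
  \<open>a\<close> injectively onto those of \<open>\<sigma>(a)\<close>. The converse implications hold because on a single
  monomial the four operations act on exponents exactly as in the closure conditions.\<close>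

lemma ideal_add: "is_ideal I \<Longrightarrow> a \<in> I \<Longrightarrow> b \<in> I \<Longrightarrow> a + b \<in> I"
  by (simp add: is_ideal_def)

lemma ideal_mult: "is_ideal I \<Longrightarrow> a \<in> I \<Longrightarrow> r * a \<in> I"
  by (simp add: is_ideal_def)

lemma ideal_diff: "is_ideal I \<Longrightarrow> a \<in> I \<Longrightarrow> b \<in> I \<Longrightarrow> a - b \<in> I"
  using ideal_add[of I a "(-1) * b"] ideal_mult[of I b "-1"] by simp

lemma ideal_sum: "is_ideal I \<Longrightarrow> (\<And>x. x \<in> A \<Longrightarrow> f x \<in> I) \<Longrightarrow> sum f A \<in> I"
  by (induction A rule: infinite_finite_induct) (auto simp: is_ideal_def)

lemma ideal_mem_cong: "is_ideal I \<Longrightarrow> a - b \<in> I \<Longrightarrow> a \<in> I \<longleftrightarrow> b \<in> I"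
  using ideal_add[of I "a - b" b] ideal_diff[of I a "a - b"] by auto

lemma ideal_mult_cong:
  assumes "is_ideal I" "a - b \<in> I" "c - d \<in> I"
  shows "a * c - b * d \<in> I"
proof -
  have "a * c - b * d = a * (c - d) + d * (a - b)" by (simp add: algebra_simps)
  then show ?thesis using assms by (metis ideal_add ideal_mult)
qed

lemma ideal_prod_cong:
  "is_ideal I \<Longrightarrow> (\<And>i. i \<in> A \<Longrightarrow> a i - b i \<in> I) \<Longrightarrow> prod a A - prod b A \<in> I"
proof (induction A rule: infinite_finite_induct)
  case (insert x A)
  then show ?case by (simp add: ideal_mult_cong)
qed (simp_all add: is_ideal_def)

lemma ideal_power_cong: "is_ideal I \<Longrightarrow> a - b \<in> I \<Longrightarrow> a ^ n - b ^ n \<in> I"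
  using ideal_prod_cong[of I "{..<n}" "\<lambda>_. a" "\<lambda>_. b"] by simp

lemma sum_single_lookup:
  "(\<Sum>m\<in>Poly_Mapping.keys p. Poly_Mapping.single m (Poly_Mapping.lookup p m)) = p"
  by (rule poly_mapping_eqI) (simp add: lookup_sum lookup_single when_def in_keys_iff)

lemma prod_single:
  fixes e :: "'i \<Rightarrow> 'm::comm_monoid_add" and c :: "'i \<Rightarrow> 'k::comm_semiring_1"
  shows "(\<Prod>i\<in>A. Poly_Mapping.single (e i) (c i)) = Poly_Mapping.single (sum e A) (prod c A)"
  by (induction A rule: infinite_finite_induct) (simp_all add: mult_single)

lemma single_one_power:
  "Poly_Mapping.single e (1 :: 'k::comm_semiring_1) ^ n = Poly_Mapping.single (\<Sum>r<n. e) 1"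
  using prod_single[of "\<lambda>_. e" "\<lambda>_. 1 :: 'k" "{..<n}"] by simp

lemma lookup_mult_at_unique_sum:
  fixes p q :: "'m::cancel_comm_monoid_add \<Rightarrow>\<^sub>0 'k::comm_ring_1"
  assumes unique: "\<And>a b. a \<in> Poly_Mapping.keys p \<Longrightarrow> b \<in> Poly_Mapping.keys q \<Longrightarrow>
                     a + b = e + f \<Longrightarrow> a = e"
  shows "Poly_Mapping.lookup (p * q) (e + f) = Poly_Mapping.lookup p e * Poly_Mapping.lookup q f"
proof -
  define c where "c = Poly_Mapping.lookup p e"
  define d where "d = Poly_Mapping.lookup q f"
  define p' where "p' = p - Poly_Mapping.single e c"
  define q' where "q' = q - Poly_Mapping.single f d"
  have keys_p': "Poly_Mapping.keys p' \<subseteq> Poly_Mapping.keys p - {e}"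
    by (auto simp: p'_def c_def in_keys_iff lookup_minus lookup_single when_def split: if_splits)
  have keys_q': "Poly_Mapping.keys q' \<subseteq> Poly_Mapping.keys q - {f}"
    by (auto simp: q'_def d_def in_keys_iff lookup_minus lookup_single when_def split: if_splits)
  have "e + f \<notin> Poly_Mapping.keys (Poly_Mapping.single e c * q')"
    using keys_mult[of "Poly_Mapping.single e c" q'] keys_q' by (fastforce split: if_splits)
  moreover have "e + f \<notin> Poly_Mapping.keys (p' * q)"
    using keys_mult[of p' q] keys_p' unique by fastforce
  moreover have "p * q =
      Poly_Mapping.single (e + f) (c * d) + Poly_Mapping.single e c * q' + p' * q"
    by (simp add: p'_def q'_def mult_single algebra_simps)
  ultimately show ?thesis
    by (simp add: lookup_add in_keys_iff c_def d_def)
qed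

section \<open>Leading monomials\<close>

locale monomial_order =
  fixes rank :: "'m::cancel_comm_monoid_add \<Rightarrow> 'c::linordered_cancel_ab_semigroup_add"
  assumes inj_rank: "inj rank"
    and rank_add: "rank (a + b) = rank a + rank b"
begin

definition is_lead :: "('m \<Rightarrow>\<^sub>0 'k::zero) \<Rightarrow> 'm \<Rightarrow> bool" where
  "is_lead p e \<longleftrightarrow> e \<in> Poly_Mapping.keys p \<and> (\<forall>k\<in>Poly_Mapping.keys p. rank k \<le> rank e)"

lemma is_lead_exists: "p \<noteq> 0 \<Longrightarrow> \<exists>e. is_lead p e"
proof -
  assume "p \<noteq> 0"
  then have "Max (rank ` Poly_Mapping.keys p) \<in> rank ` Poly_Mapping.keys p"
    by (intro Max_in) auto
  then obtain e where "e \<in> Poly_Mapping.keys p" "rank e = Max (rank ` Poly_Mapping.keys p)"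
    by auto
  then have "is_lead p e" by (simp add: is_lead_def)
  then show ?thesis ..
qed

lemma sum_eq_of_rank_le:
  assumes "rank a \<le> rank e" "rank b \<le> rank f" "a + b = e + f"
  shows "a = e \<and> b = f"
proof -
  have sum: "rank a + rank b = rank e + rank f" using assms(3) by (metis rank_add)
  have "rank a = rank e"
    using add_less_le_mono[of "rank a" "rank e" "rank b" "rank f"] sum assms(1,2) by fastforce
  moreover have "rank b = rank f"
    using add_le_less_mono[of "rank a" "rank e" "rank b" "rank f"] sum assms(1,2) by fastforce
  ultimately show ?thesis using inj_rank by (simp add: inj_eq)
qed

lemma is_lead_mult:
  fixes p q :: "'m \<Rightarrow>\<^sub>0 'k::idom"
  assumes "is_lead p e" "is_lead q f"
  shows "is_lead (p * q) (e + f)"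
proof -
  have "Poly_Mapping.lookup (p * q) (e + f) = Poly_Mapping.lookup p e * Poly_Mapping.lookup q f"
    using assms sum_eq_of_rank_le by (intro lookup_mult_at_unique_sum) (auto simp: is_lead_def)
  then have "e + f \<in> Poly_Mapping.keys (p * q)"
    using assms by (simp add: is_lead_def in_keys_iff)
  moreover have "rank k \<le> rank (e + f)" if "k \<in> Poly_Mapping.keys (p * q)" for k
    using keys_mult[of p q] that assms by (force simp: is_lead_def rank_add intro: add_mono)
  ultimately show ?thesis by (simp add: is_lead_def)
qed

lemma is_lead_prod:
  fixes P :: "'i \<Rightarrow> 'm \<Rightarrow>\<^sub>0 'k::idom"
  assumes "finite A" "\<And>i. i \<in> A \<Longrightarrow> is_lead (P i) (e i)"
  shows "is_lead (prod P A) (sum e A)"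
  using assms
proof (induction A rule: finite_induct)
  case empty
  show ?case by (simp add: is_lead_def)
next
  case (insert a A)
  then show ?case by (simp add: is_lead_mult)
qed

lemma is_lead_power:
  fixes p :: "'m \<Rightarrow>\<^sub>0 'k::idom"
  shows "is_lead p e \<Longrightarrow> is_lead (p ^ n) (\<Sum>i<n. e)"
  using is_lead_prod[of "{..<n}" "\<lambda>_. p" "\<lambda>_. e"] by simp

end

lemma lookup_exp_monomial:
  "Poly_Mapping.lookup (exp_monomial u) k = coeff (u (fst k)) (snd k)"
proof -
  have "{(i, j). coeff (u i) j \<noteq> 0} \<subseteq> (\<Union>i. {i} \<times> {..degree (u i)})"
    by (auto intro: le_degree)
  then have "finite {x. (\<lambda>(i, j). coeff (u i) j) x \<noteq> 0}"
    by (auto intro: finite_subset)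
  then show ?thesis by (simp add: exp_monomial_def split_def)
qed

lemma exp_monomial_add: "exp_monomial (exps_add u v) = exp_monomial u + exp_monomial v"
  by (rule poly_mapping_eqI) (simp add: lookup_exp_monomial lookup_add exps_add_def)

lemma exp_monomial_sum: "exp_monomial (\<lambda>i. \<Sum>a\<in>A. u a i) = (\<Sum>a\<in>A. exp_monomial (u a))"
  by (rule poly_mapping_eqI) (simp add: lookup_exp_monomial lookup_sum coeff_sum)

lemma exp_monomial_surj: "\<exists>u. exp_monomial u = m"
proof -
  obtain B where B: "\<And>j. j \<in> snd ` Poly_Mapping.keys m \<Longrightarrow> j < B"
    using finite_nat_set_iff_bounded[of "snd ` Poly_Mapping.keys m"] by auto
  define u where "u i = (\<Sum>j<B. monom (Poly_Mapping.lookup m (i, j)) j)" for i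
  have "Poly_Mapping.lookup (exp_monomial u) (i, j) = Poly_Mapping.lookup m (i, j)" for i j
    using B[of j] by (force simp: u_def lookup_exp_monomial coeff_sum in_keys_iff)
  then have "exp_monomial u = m" by (intro poly_mapping_eqI) auto
  then show ?thesis by blast
qed

lemma lookup_shift_mon:
  "Poly_Mapping.lookup (shift_mon m) (i, j) =
     (if j = 0 then 0 else Poly_Mapping.lookup m (i, j - 1))"
proof -
  define f where "f = (\<lambda>(i, j). if j = 0 then 0 else Poly_Mapping.lookup m (i, j - 1))"
  have "{x. f x \<noteq> 0} \<subseteq> (\<lambda>(i, j). (i, Suc j)) ` Poly_Mapping.keys m"
  proof
    fix x assume "x \<in> {x. f x \<noteq> 0}"
    then have "x = (\<lambda>(i, j). (i, Suc j)) (fst x, snd x - 1)"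
      and "(fst x, snd x - 1) \<in> Poly_Mapping.keys m"
      by (auto simp: f_def in_keys_iff split: prod.splits if_splits)
    then show "x \<in> (\<lambda>(i, j). (i, Suc j)) ` Poly_Mapping.keys m" by (rule image_eqI)
  qed
  then have "finite {x. f x \<noteq> 0}" by (rule finite_subset) simp
  then show ?thesis by (simp add: shift_mon_def flip: f_def) (simp add: f_def)
qed

lemma inj_shift_mon: "inj shift_mon"
proof (rule injI, rule poly_mapping_eqI)
  fix a b :: "'n \<times> nat \<Rightarrow>\<^sub>0 nat" and k
  assume "shift_mon a = shift_mon b"
  then have "Poly_Mapping.lookup (shift_mon a) (fst k, Suc (snd k)) =
             Poly_Mapping.lookup (shift_mon b) (fst k, Suc (snd k))" by simp
  then show "Poly_Mapping.lookup a k = Poly_Mapping.lookup b k" by (simp add: lookup_shift_mon)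
qed

lemma exp_monomial_smult_x:
  "exp_monomial (exps_smult [:0, 1:] u) = shift_mon (exp_monomial u)"
proof (rule poly_mapping_eqI)
  fix k
  show "Poly_Mapping.lookup (exp_monomial (exps_smult [:0, 1:] u)) k =
        Poly_Mapping.lookup (shift_mon (exp_monomial u)) k"
    by (cases k)
       (simp add: lookup_exp_monomial lookup_shift_mon exps_smult_def coeff_pCons split: nat.split)
qed

lemma exp_monomial_smult_monom:
  "exp_monomial (exps_smult (monom 1 i) u) = (shift_mon ^^ i) (exp_monomial u)"
proof (induction i)
  case 0
  have "exps_smult (monom 1 0) u = u" by (simp only: monom_eq_1) (simp add: exps_smult_def)
  then show ?case by simp
next
  case (Suc i)
  have "monom 1 (Suc i) = [:0, 1:] * monom (1 :: nat) i"
    by (simp add: monom_Suc poly_eq_iff coeff_pCons split: nat.split)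
  then have "exps_smult (monom 1 (Suc i)) u = exps_smult [:0, 1:] (exps_smult (monom 1 i) u)"
    by (simp only: exps_smult_def mult.assoc)
  then show ?case using Suc by (simp only: exp_monomial_smult_x funpow.simps o_apply)
qed

text \<open>The exponent of \<open>(y^e)^g\<close>: \<open>g = \<Sum> c\<^sub>i x\<^sup>i\<close> acts on \<open>e\<close> as \<open>\<Sum> c\<^sub>i \<sigma>\<^sup>i(e)\<close>.\<close>

definition mon_dpower :: "nat poly \<Rightarrow> ('n \<times> nat \<Rightarrow>\<^sub>0 nat) \<Rightarrow> ('n \<times> nat \<Rightarrow>\<^sub>0 nat)" where
  "mon_dpower g e = (\<Sum>i\<le>degree g. \<Sum>r<coeff g i. (shift_mon ^^ i) e)"

lemma exp_monomial_exps_smult: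
  "exp_monomial (exps_smult g u) = mon_dpower g (exp_monomial u)"
proof -
  have "g * u j = (\<Sum>i\<le>degree g. \<Sum>r<coeff g i. monom 1 i * u j)" for j
  proof -
    have "g * u j = (\<Sum>i\<le>degree g. monom (coeff g i) i) * u j"
      by (simp add: poly_as_sum_of_monoms)
    also have "\<dots> = (\<Sum>i\<le>degree g. of_nat (coeff g i) * (monom 1 i * u j))"
      by (simp add: sum_distrib_right smult_monom of_nat_poly flip: mult_smult_left)
    finally show ?thesis by simp
  qed
  then have "exps_smult g u = (\<lambda>j. \<Sum>i\<le>degree g. \<Sum>r<coeff g i. exps_smult (monom 1 i) u j)"
    by (simp add: exps_smult_def)
  then show ?thesis
    by (simp only: mon_dpower_def exp_monomial_sum exp_monomial_smult_monom)
qed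

lemma mon_dpower_const: "mon_dpower [:m:] e = (\<Sum>r<m. e)"
  by (simp add: mon_dpower_def)

section \<open>A term order compatible with the shift\<close>

text \<open>Applying \<open>\<sigma>\<close> adds \<open>card UNIV\<close> to every position, so the lexicographic order on
  the re-indexed monomials is compatible with \<open>\<sigma>\<close> as well as with multiplication.\<close>

definition var_pos :: "'n::finite \<times> nat \<Rightarrow> nat" where
  "var_pos = (\<lambda>(i, j). j * card (UNIV :: 'n set) + to_nat_on UNIV i)"

lemma to_nat_on_less_card: "to_nat_on UNIV (i :: 'n::finite) < card (UNIV :: 'n set)"
  using to_nat_on_finite[of "UNIV :: 'n set"] by (auto simp: bij_betw_def)

lemma bij_var_pos: "bij (var_pos :: 'n::finite \<times> nat \<Rightarrow> nat)"
proof (rule bijI)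
  define N where "N = card (UNIV :: 'n set)"
  have bij_to_nat: "bij_betw (to_nat_on UNIV) (UNIV :: 'n set) {..<N}"
    unfolding N_def by (rule to_nat_on_finite) simp
  have div_var_pos: "var_pos (i, j) div N = j"
    and mod_var_pos: "var_pos (i, j) mod N = to_nat_on UNIV i" for i :: 'n and j
    using to_nat_on_less_card[of i] by (simp_all add: var_pos_def N_def)
  show "inj (var_pos :: 'n \<times> nat \<Rightarrow> nat)"
  proof (rule injI, clarify)
    fix i i' :: 'n and j j'
    assume "var_pos (i, j) = var_pos (i', j')"
    then have "j = j'" "to_nat_on UNIV i = to_nat_on UNIV i'"
      by (metis div_var_pos, metis mod_var_pos)
    with bij_to_nat show "i = i' \<and> j = j'" by (auto simp: bij_betw_def inj_on_def)
  qed
  show "surj (var_pos :: 'n \<times> nat \<Rightarrow> nat)"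
    unfolding surj_def
  proof
    fix r :: nat
    have "r mod N \<in> to_nat_on UNIV ` (UNIV :: 'n set)"
      using bij_to_nat finite_UNIV_card_ge_0[where 'a='n] by (simp add: bij_betw_def N_def)
    then obtain i :: 'n where "to_nat_on UNIV i = r mod N" by auto
    then have "r = var_pos (i, r div N)" by (simp add: var_pos_def N_def)
    then show "\<exists>x :: 'n \<times> nat. r = var_pos x" by blast
  qed
qed

lemma inj_inv_var_pos: "inj (inv var_pos)"
  using bij_imp_bij_inv[OF bij_var_pos] by (rule bij_is_inj)

definition mon_rank :: "('n::finite \<times> nat \<Rightarrow>\<^sub>0 nat) \<Rightarrow> (nat \<Rightarrow>\<^sub>0 nat)" where
  "mon_rank m = Poly_Mapping.map_key (inv var_pos) m"

lemma lookup_mon_rank: "Poly_Mapping.lookup (mon_rank m) (var_pos k) = Poly_Mapping.lookup m k"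
  by (simp add: mon_rank_def map_key.rep_eq[OF inj_inv_var_pos]
      inv_f_f[OF bij_is_inj[OF bij_var_pos]])

interpretation mon_order: monomial_order "mon_rank :: ('n::finite \<times> nat \<Rightarrow>\<^sub>0 nat) \<Rightarrow> _"
proof
  show "inj (mon_rank :: ('n \<times> nat \<Rightarrow>\<^sub>0 nat) \<Rightarrow> _)"
    by (rule injI, rule poly_mapping_eqI) (metis lookup_mon_rank)
  show "mon_rank (a + b) = mon_rank a + mon_rank b" for a b :: "'n \<times> nat \<Rightarrow>\<^sub>0 nat"
    by (simp add: mon_rank_def map_key_plus[OF inj_inv_var_pos])
qed

lemma lookup_mon_rank_shift:
  fixes m :: "'n::finite \<times> nat \<Rightarrow>\<^sub>0 nat"
  defines "N \<equiv> card (UNIV :: 'n set)"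
  shows "Poly_Mapping.lookup (mon_rank (shift_mon m)) r =
           (if r < N then 0 else Poly_Mapping.lookup (mon_rank m) (r - N))"
proof -
  obtain i j where r: "r = var_pos (i :: 'n, j)"
    using bij_var_pos by (metis bij_pointE surj_pair)
  show ?thesis
  proof (cases j)
    case 0
    then show ?thesis using to_nat_on_less_card[of i]
      by (simp only: r lookup_mon_rank lookup_shift_mon) (simp add: var_pos_def N_def)
  next
    case (Suc j')
    then have "r - N = var_pos (i, j')" "\<not> r < N" by (simp_all add: r var_pos_def N_def)
    then show ?thesis using Suc by (simp add: r lookup_mon_rank lookup_shift_mon)
  qed
qed

lemma mon_rank_shift_mono:
  fixes a b :: "'n::finite \<times> nat \<Rightarrow>\<^sub>0 nat"
  assumes "mon_rank a \<le> mon_rank b"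
  shows "mon_rank (shift_mon a) \<le> mon_rank (shift_mon b)"
proof (cases "mon_rank a = mon_rank b")
  case True
  then have "a = b" using mon_order.inj_rank by (rule injD[rotated])
  then show ?thesis by simp
next
  case False
  let ?A = "Poly_Mapping.lookup (mon_rank a)" and ?B = "Poly_Mapping.lookup (mon_rank b)"
  from False assms have "less_fun ?A ?B"
    by (simp add: less_poly_mapping.rep_eq flip: less_poly_mapping.rep_eq)
  then obtain k where k: "?A k < ?B k" "\<And>k'. k' < k \<Longrightarrow> ?A k' = ?B k'"
    by (auto elim: less_funE)
  have "less_fun (Poly_Mapping.lookup (mon_rank (shift_mon a)))
                 (Poly_Mapping.lookup (mon_rank (shift_mon b)))"
    using k by (intro less_funI exI[of _ "k + card (UNIV :: 'n set)"])
               (auto simp: lookup_mon_rank_shift)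
  then show ?thesis by (simp add: less_poly_mapping.rep_eq[symmetric])
qed

locale difference_field =
  fixes \<sigma> :: "'k::field \<Rightarrow> 'k"
  assumes sigma_add: "\<sigma> (a + b) = \<sigma> a + \<sigma> b"
    and sigma_mult: "\<sigma> (a * b) = \<sigma> a * \<sigma> b"
    and sigma_one: "\<sigma> 1 = 1"
begin

lemma sigma_zero: "\<sigma> 0 = 0"
proof -
  have "\<sigma> 0 + \<sigma> 0 = \<sigma> 0 + 0" using sigma_add[of 0 0] by simp
  then show ?thesis by (simp only: add_left_cancel)
qed

lemma sigma_eq_0_iff: "\<sigma> c = 0 \<longleftrightarrow> c = 0"
proof
  assume "\<sigma> c = 0"
  then have "\<sigma> (c * inverse c) = 0" by (simp add: sigma_mult)
  then show "c = 0" using sigma_one by (cases "c = 0") simp_all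
qed (simp add: sigma_zero)

lemma lookup_sigmaR_shift_mon:
  "Poly_Mapping.lookup (sigmaR \<sigma> p) (shift_mon m) = \<sigma> (Poly_Mapping.lookup p m)"
proof -
  have "Poly_Mapping.lookup (sigmaR \<sigma> p) (shift_mon m) =
        (\<Sum>m'\<in>Poly_Mapping.keys p. if m' = m then \<sigma> (Poly_Mapping.lookup p m') else 0)"
    unfolding sigmaR_def lookup_sum
    by (rule sum.cong) (auto simp: lookup_single when_def dest: injD[OF inj_shift_mon])
  also have "\<dots> = \<sigma> (Poly_Mapping.lookup p m)"
    by (simp add: sum.delta in_keys_iff sigma_zero)
  finally show ?thesis .
qed

lemma lookup_sigmaR_not_shift_mon:
  "k \<notin> range shift_mon \<Longrightarrow> Poly_Mapping.lookup (sigmaR \<sigma> p) k = 0"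
  unfolding sigmaR_def lookup_sum by (intro sum.neutral) (auto simp: lookup_single when_def)

lemma sigmaR_eqI:
  assumes "\<And>m. Poly_Mapping.lookup p (shift_mon m) = Poly_Mapping.lookup q (shift_mon m)"
    and "\<And>k. k \<notin> range shift_mon \<Longrightarrow> Poly_Mapping.lookup p k = Poly_Mapping.lookup q k"
  shows "p = q"
  using assms by (intro poly_mapping_eqI) (metis rangeE)

lemma sigmaR_add: "sigmaR \<sigma> (p + q) = sigmaR \<sigma> p + sigmaR \<sigma> q"
  by (rule sigmaR_eqI)
     (simp_all add: lookup_sigmaR_shift_mon lookup_sigmaR_not_shift_mon lookup_add sigma_add)

lemma sigmaR_diff: "sigmaR \<sigma> (p - q) = sigmaR \<sigma> p - sigmaR \<sigma> q"
  using sigmaR_add[of "p - q" q] by (simp add: algebra_simps)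

lemma sigmaR_single:
  "sigmaR \<sigma> (Poly_Mapping.single m c) = Poly_Mapping.single (shift_mon m) (\<sigma> c)"
  by (rule sigmaR_eqI)
     (auto simp: lookup_sigmaR_shift_mon lookup_sigmaR_not_shift_mon lookup_single when_def
        sigma_zero dest: injD[OF inj_shift_mon])

lemma keys_sigmaR: "Poly_Mapping.keys (sigmaR \<sigma> p) = shift_mon ` Poly_Mapping.keys p"
proof (intro set_eqI iffI)
  fix k assume "k \<in> Poly_Mapping.keys (sigmaR \<sigma> p)"
  then obtain m where "k = shift_mon m"
    using lookup_sigmaR_not_shift_mon by (force simp: in_keys_iff)
  with \<open>k \<in> Poly_Mapping.keys (sigmaR \<sigma> p)\<close> show "k \<in> shift_mon ` Poly_Mapping.keys p"
    by (auto simp: lookup_sigmaR_shift_mon in_keys_iff sigma_eq_0_iff)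
qed (auto simp: lookup_sigmaR_shift_mon in_keys_iff sigma_eq_0_iff)

lemma is_lead_sigmaR_pow:
  "mon_order.is_lead p e \<Longrightarrow> mon_order.is_lead ((sigmaR \<sigma> ^^ i) p) ((shift_mon ^^ i) e)"
  by (induction i) (auto simp: mon_order.is_lead_def keys_sigmaR intro: mon_rank_shift_mono)

lemma sigmaR_pow_single_one:
  "(sigmaR \<sigma> ^^ i) (Poly_Mapping.single e 1) = Poly_Mapping.single ((shift_mon ^^ i) e) 1"
  by (induction i) (simp_all add: sigmaR_single sigma_one)

lemma is_lead_dpower:
  "mon_order.is_lead a e \<Longrightarrow> mon_order.is_lead (dpower \<sigma> a g) (mon_dpower g e)"
  unfolding dpower_def mon_dpower_def
  by (intro mon_order.is_lead_prod mon_order.is_lead_power is_lead_sigmaR_pow) simp_all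

lemma dpower_single_one:
  "dpower \<sigma> (Poly_Mapping.single e 1) g = Poly_Mapping.single (mon_dpower g e) 1"
  by (simp add: dpower_def mon_dpower_def sigmaR_pow_single_one single_one_power prod_single)

lemma sigmaR_pow_cong:
  assumes "sigma_ideal \<sigma> I" "a - b \<in> I"
  shows "(sigmaR \<sigma> ^^ i) a - (sigmaR \<sigma> ^^ i) b \<in> I"
proof (induction i)
  case (Suc i)
  then show ?case using assms(1) by (auto simp: sigma_ideal_def simp flip: sigmaR_diff)
qed (simp add: assms(2))

lemma dpower_cong:
  assumes "sigma_ideal \<sigma> I" "a - b \<in> I"
  shows "dpower \<sigma> a g - dpower \<sigma> b g \<in> I"
proof -
  have "is_ideal I" using assms(1) by (simp add: sigma_ideal_def)
  then show ?thesis
    unfolding dpower_def using sigmaR_pow_cong[OF assms]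
    by (intro ideal_prod_cong ideal_power_cong)
qed

end

section \<open>Monomial ideals\<close>

lemma monomial_ideal_mem_iff:
  fixes I :: "('n::finite, 'k::comm_ring_1) dpoly set"
  assumes "monomial_ideal I"
  shows "p \<in> I \<longleftrightarrow> (\<forall>m\<in>Poly_Mapping.keys p. Poly_Mapping.single m 1 \<in> I)"
proof -
  have ideal: "is_ideal I" using assms by (simp add: monomial_ideal_def)
  obtain G where G: "G \<subseteq> range ymon" "I = ideal_gen G"
    using assms by (auto simp: monomial_ideal_def)
  define J where "J = {p :: ('n, 'k) dpoly. \<forall>m\<in>Poly_Mapping.keys p. Poly_Mapping.single m 1 \<in> I}"
  have "is_ideal J"
    unfolding is_ideal_def
  proof (intro conjI ballI allI impI)
    show "0 \<in> J" by (simp add: J_def)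
    show "a + b \<in> J" if "a \<in> J" "b \<in> J" for a b
      using that keys_add[of a b] by (auto simp: J_def)
    show "r * a \<in> J" if "a \<in> J" for r a
      unfolding J_def
    proof (intro CollectI ballI)
      fix m assume "m \<in> Poly_Mapping.keys (r * a)"
      then obtain x y where "m = x + y" "y \<in> Poly_Mapping.keys a"
        using keys_mult by blast
      with \<open>a \<in> J\<close> ideal_mult[OF ideal, of "Poly_Mapping.single y 1" "Poly_Mapping.single x 1"]
      show "Poly_Mapping.single m 1 \<in> I" by (simp add: J_def mult_single)
    qed
  qed
  moreover have "G \<subseteq> J"
  proof -
    have "G \<subseteq> I" using G(2) by (auto simp: ideal_gen_def)
    with G(1) show ?thesis by (force simp: J_def ymon_def)
  qed
  ultimately have "I \<subseteq> J" using G(2) by (auto simp: ideal_gen_def)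
  moreover have "p \<in> I" if "p \<in> J" for p
  proof -
    have "Poly_Mapping.single m (Poly_Mapping.lookup p m) \<in> I" if "m \<in> Poly_Mapping.keys p" for m
      using ideal_mult[OF ideal, of "Poly_Mapping.single m 1"
          "Poly_Mapping.single 0 (Poly_Mapping.lookup p m)"] \<open>p \<in> J\<close> that by (simp add: J_def mult_single)
    then have "(\<Sum>m\<in>Poly_Mapping.keys p. Poly_Mapping.single m (Poly_Mapping.lookup p m)) \<in> I"
      by (rule ideal_sum[OF ideal])
    then show ?thesis by (simp only: sum_single_lookup)
  qed
  ultimately show ?thesis unfolding J_def by blast
qed

lemma monomial_ideal_reduce:
  fixes I :: "('n::finite, 'k::comm_ring_1) dpoly set"
  assumes "monomial_ideal I" "a \<notin> I"
  obtains a' where "a - a' \<in> I" "a' \<noteq> 0"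
    "\<And>m. m \<in> Poly_Mapping.keys a' \<Longrightarrow> Poly_Mapping.single m 1 \<notin> I"
proof -
  define a' where "a' = (\<Sum>m\<in>{m \<in> Poly_Mapping.keys a. Poly_Mapping.single m 1 \<notin> I}.
                          Poly_Mapping.single m (Poly_Mapping.lookup a m))"
  have lookup_a': "Poly_Mapping.lookup a' m =
      (if Poly_Mapping.single m 1 \<in> I then 0 else Poly_Mapping.lookup a m)" for m
    by (simp add: a'_def lookup_sum lookup_single when_def in_keys_iff)
  have "a - a' \<in> I"
    by (rule monomial_ideal_mem_iff[OF assms(1), THEN iffD2])
       (auto simp: in_keys_iff lookup_minus lookup_a' split: if_splits)
  moreover have "Poly_Mapping.single m 1 \<notin> I" if "m \<in> Poly_Mapping.keys a'" for m
    using that by (auto simp: in_keys_iff lookup_a')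
  moreover have "a' \<noteq> 0"
    using \<open>a - a' \<in> I\<close> assms(2) by auto
  ultimately show thesis using that by blast
qed

lemma monomial_ideal_reduce_lead:
  fixes I :: "('n::finite, 'k::comm_ring_1) dpoly set"
  assumes "monomial_ideal I" "a \<notin> I"
  obtains a' u where "a - a' \<in> I" "mon_order.is_lead a' (exp_monomial u)" "u \<notin> support_set I"
proof -
  obtain a' where a': "a - a' \<in> I" "a' \<noteq> 0"
    "\<And>m. m \<in> Poly_Mapping.keys a' \<Longrightarrow> Poly_Mapping.single m 1 \<notin> I"
    using monomial_ideal_reduce[OF assms] by blast
  obtain e where e: "mon_order.is_lead a' e"
    using mon_order.is_lead_exists[OF a'(2)] by blast
  obtain u where u: "exp_monomial u = e"
    using exp_monomial_surj by blast
  have "u \<notin> support_set I"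
    using a'(3) e u by (auto simp: support_set_def ymon_def mon_order.is_lead_def)
  with a'(1) e u show thesis by (intro that) auto
qed

lemma monomial_ideal_lead_not_mem:
  fixes I :: "('n::finite, 'k::comm_ring_1) dpoly set"
  assumes "monomial_ideal I" "mon_order.is_lead p (exp_monomial u)" "u \<notin> support_set I"
  shows "p \<notin> I"
  using assms monomial_ideal_mem_iff[OF assms(1), of p]
  by (auto simp: mon_order.is_lead_def support_set_def ymon_def)

lemma monomial_ideal_reflect:
  fixes I :: "('n::finite, 'k::comm_ring_1) dpoly set"
  assumes mono: "monomial_ideal I"
    and cong: "\<And>a b. a - b \<in> I \<Longrightarrow> F a - F b \<in> I"
    and lead: "\<And>a u. mon_order.is_lead a (exp_monomial u) \<Longrightarrow>
                 mon_order.is_lead (F a) (exp_monomial (T u))"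
    and closed: "\<And>u. T u \<in> support_set I \<Longrightarrow> u \<in> support_set I"
    and "F a \<in> I"
  shows "a \<in> I"
proof (rule ccontr)
  assume "a \<notin> I"
  then obtain a' u where
    a': "a - a' \<in> I" "mon_order.is_lead a' (exp_monomial u)" "u \<notin> support_set I"
    using monomial_ideal_reduce_lead[OF mono] by blast
  have "F a' \<notin> I"
    using monomial_ideal_lead_not_mem[OF mono lead[OF a'(2)]] closed a'(3) by blast
  moreover have "is_ideal I" using mono by (simp add: monomial_ideal_def)
  ultimately show False
    using ideal_mem_cong[OF _ cong[OF a'(1)]] \<open>F a \<in> I\<close> by blast
qed

lemma ymon_power: "ymon u ^ m = (ymon (exps_smult [:m:] u) :: ('n::finite, 'k::comm_ring_1) dpoly)"
  by (simp add: ymon_def single_one_power exp_monomial_exps_smult mon_dpower_const)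

lemma ymon_mult: "ymon u * ymon v = (ymon (exps_add u v) :: ('n::finite, 'k::comm_ring_1) dpoly)"
  by (simp add: ymon_def mult_single exp_monomial_add)

lemma radical_ideal_iff_support_set:
  fixes I :: "('n::finite, 'k::idom) dpoly set"
  assumes mono: "monomial_ideal I"
  shows "radical_ideal I \<longleftrightarrow>
    (\<forall>(m::nat) u. m \<noteq> 0 \<longrightarrow> exps_smult [:m:] u \<in> support_set I \<longrightarrow> u \<in> support_set I)"
proof
  assume "radical_ideal I"
  then show "\<forall>(m::nat) u. m \<noteq> 0 \<longrightarrow> exps_smult [:m:] u \<in> support_set I \<longrightarrow> u \<in> support_set I"
    by (auto simp: radical_ideal_def support_set_def simp flip: ymon_power)
next
  assume closed: "\<forall>(m::nat) u. m \<noteq> 0 \<longrightarrow> exps_smult [:m:] u \<in> support_set I \<longrightarrow> u \<in> support_set I"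
  have "is_ideal I" using mono by (simp add: monomial_ideal_def)
  show "radical_ideal I"
    unfolding radical_ideal_def
  proof (intro allI impI)
    fix a :: "('n, 'k) dpoly" and m :: nat
    assume "0 < m" "a ^ m \<in> I"
    show "a \<in> I"
    proof (rule monomial_ideal_reflect[OF mono, where F = "\<lambda>a. a ^ m" and T = "exps_smult [:m:]"])
      show "a' ^ m - b ^ m \<in> I" if "a' - b \<in> I" for a' b
        using \<open>is_ideal I\<close> that by (rule ideal_power_cong)
      show "mon_order.is_lead (a' ^ m) (exp_monomial (exps_smult [:m:] u))"
        if "mon_order.is_lead a' (exp_monomial u)" for a' :: "('n, 'k) dpoly" and u
        using mon_order.is_lead_power[OF that]
        by (simp add: exp_monomial_exps_smult mon_dpower_const)
    next
      show "u \<in> support_set I" if "exps_smult [:m:] u \<in> support_set I" for u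
        using closed \<open>0 < m\<close> that by blast
    qed (rule \<open>a ^ m \<in> I\<close>)
  qed
qed

lemma prime_ideal_iff_support_set:
  fixes I :: "('n::finite, 'k::idom) dpoly set"
  assumes mono: "monomial_ideal I" and proper: "I \<noteq> UNIV"
  shows "prime_ideal I \<longleftrightarrow>
    (\<forall>u v. exps_add u v \<in> support_set I \<longrightarrow> u \<in> support_set I \<or> v \<in> support_set I)"
proof
  assume "prime_ideal I"
  then show "\<forall>u v. exps_add u v \<in> support_set I \<longrightarrow> u \<in> support_set I \<or> v \<in> support_set I"
    by (auto simp: prime_ideal_def support_set_def simp flip: ymon_mult)
next
  assume closed: "\<forall>u v. exps_add u v \<in> support_set I \<longrightarrow> u \<in> support_set I \<or> v \<in> support_set I"
  have ideal: "is_ideal I" using mono by (simp add: monomial_ideal_def)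
  have "a \<in> I \<or> b \<in> I" if "a * b \<in> I" for a b :: "('n, 'k) dpoly"
  proof (rule ccontr)
    assume "\<not> (a \<in> I \<or> b \<in> I)"
    then obtain a' u b' v where
      a': "a - a' \<in> I" "mon_order.is_lead a' (exp_monomial u)" "u \<notin> support_set I" and
      b': "b - b' \<in> I" "mon_order.is_lead b' (exp_monomial v)" "v \<notin> support_set I"
      using monomial_ideal_reduce_lead[OF mono] by metis
    have "mon_order.is_lead (a' * b') (exp_monomial (exps_add u v))"
      using mon_order.is_lead_mult[OF a'(2) b'(2)] by (simp add: exp_monomial_add)
    then have "a' * b' \<notin> I"
      using monomial_ideal_lead_not_mem[OF mono] closed a'(3) b'(3) by blast
    then show False
      using ideal_mem_cong[OF ideal ideal_mult_cong[OF ideal a'(1) b'(1)]] \<open>a * b \<in> I\<close> by blast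
  qed
  then show "prime_ideal I" using ideal proper by (simp add: prime_ideal_def)
qed

context difference_field
begin

lemma sigmaR_ymon: "sigmaR \<sigma> (ymon u) = ymon (exps_smult [:0, 1:] u)"
  by (simp only: ymon_def sigmaR_single sigma_one exp_monomial_smult_x)

lemma dpower_ymon: "dpower \<sigma> (ymon u) g = ymon (exps_smult g u)"
  by (simp add: ymon_def dpower_single_one exp_monomial_exps_smult)

lemma reflexive_ideal_iff_support_set:
  fixes I :: "('n::finite, 'k) dpoly set"
  assumes mono: "monomial_ideal I"
  shows "reflexive_ideal \<sigma> I \<longleftrightarrow>
    (\<forall>u. exps_smult [:0, 1:] u \<in> support_set I \<longrightarrow> u \<in> support_set I)"
proof
  assume "reflexive_ideal \<sigma> I"
  then show "\<forall>u. exps_smult [:0, 1:] u \<in> support_set I \<longrightarrow> u \<in> support_set I"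
    unfolding reflexive_ideal_def support_set_def mem_Collect_eq sigmaR_ymon[symmetric] by blast
next
  assume closed: "\<forall>u. exps_smult [:0, 1:] u \<in> support_set I \<longrightarrow> u \<in> support_set I"
  have "Poly_Mapping.single m 1 \<in> I"
    if "sigmaR \<sigma> a \<in> I" "m \<in> Poly_Mapping.keys a" for a :: "('n, 'k) dpoly" and m
  proof -
    obtain u where u: "exp_monomial u = m" using exp_monomial_surj by blast
    have "Poly_Mapping.single (shift_mon m) 1 \<in> I"
      using that monomial_ideal_mem_iff[OF mono, of "sigmaR \<sigma> a"] by (simp add: keys_sigmaR)
    then have "exps_smult [:0, 1:] u \<in> support_set I"
      using u by (simp only: support_set_def ymon_def exp_monomial_smult_x mem_Collect_eq)
    then show ?thesis using closed u by (auto simp: support_set_def ymon_def)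
  qed
  then show "reflexive_ideal \<sigma> I"
    unfolding reflexive_ideal_def by (metis monomial_ideal_mem_iff[OF mono])
qed

lemma perfect_ideal_iff_support_set:
  fixes I :: "('n::finite, 'k) dpoly set"
  assumes mono: "monomial_ideal I" and sig: "sigma_ideal \<sigma> I"
  shows "perfect_ideal \<sigma> I \<longleftrightarrow>
    (\<forall>g u. g \<noteq> 0 \<longrightarrow> exps_smult g u \<in> support_set I \<longrightarrow> u \<in> support_set I)"
proof
  assume "perfect_ideal \<sigma> I"
  then show "\<forall>g u. g \<noteq> 0 \<longrightarrow> exps_smult g u \<in> support_set I \<longrightarrow> u \<in> support_set I"
    by (auto simp: perfect_ideal_def support_set_def simp flip: dpower_ymon)
next
  assume closed: "\<forall>g u. g \<noteq> 0 \<longrightarrow> exps_smult g u \<in> support_set I \<longrightarrow> u \<in> support_set I"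
  show "perfect_ideal \<sigma> I"
    unfolding perfect_ideal_def
  proof (intro allI impI)
    fix a :: "('n, 'k) dpoly" and g :: "nat poly"
    assume "g \<noteq> 0" "dpower \<sigma> a g \<in> I"
    show "a \<in> I"
    proof (rule monomial_ideal_reflect[OF mono,
          where F = "\<lambda>a. dpower \<sigma> a g" and T = "exps_smult g"])
      show "mon_order.is_lead (dpower \<sigma> a' g) (exp_monomial (exps_smult g u))"
        if "mon_order.is_lead a' (exp_monomial u)" for a' :: "('n, 'k) dpoly" and u
        using is_lead_dpower[OF that] by (simp add: exp_monomial_exps_smult)
    next
      show "u \<in> support_set I" if "exps_smult g u \<in> support_set I" for u
        using closed \<open>g \<noteq> 0\<close> that by blast
    qed (use \<open>dpower \<sigma> a g \<in> I\<close> dpower_cong[OF sig] in blast)+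
  qed
qed

end

theorem proposition3p6:
  fixes \<sigma> :: "'k::field_char_0 \<Rightarrow> 'k"
    and I :: "('n::finite, 'k) dpoly set"
  assumes hom_add: "\<And>a b. \<sigma> (a + b) = \<sigma> a + \<sigma> b"
    and hom_mult: "\<And>a b. \<sigma> (a * b) = \<sigma> a * \<sigma> b"
    and hom_one: "\<sigma> 1 = 1"
    and mono: "monomial_ideal I"
    and sig: "sigma_ideal \<sigma> I"
  shows "(radical_ideal I \<longleftrightarrow>
            (\<forall>(m::nat) u. m \<noteq> 0 \<longrightarrow> exps_smult [:m:] u \<in> support_set I \<longrightarrow> u \<in> support_set I))
       \<and> (reflexive_ideal \<sigma> I \<longleftrightarrow>
            (\<forall>u. exps_smult [:0, 1:] u \<in> support_set I \<longrightarrow> u \<in> support_set I))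
       \<and> (perfect_ideal \<sigma> I \<longleftrightarrow>
            (\<forall>g u. g \<noteq> 0 \<longrightarrow> exps_smult g u \<in> support_set I \<longrightarrow> u \<in> support_set I))
       \<and> (I \<noteq> UNIV \<longrightarrow> (prime_ideal I \<longleftrightarrow>
            (\<forall>u v. exps_add u v \<in> support_set I \<longrightarrow> u \<in> support_set I \<or> v \<in> support_set I)))"
proof -
  interpret difference_field \<sigma>
    using hom_add hom_mult hom_one by unfold_locales
  show ?thesis
    using radical_ideal_iff_support_set[OF mono] reflexive_ideal_iff_support_set[OF mono]
      perfect_ideal_iff_support_set[OF mono sig] prime_ideal_iff_support_set[OF mono]
    by blast
qed

end
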